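(* Let $\mathcal{U}=[c,d]\subset\mathbb{R}$ with $c<d$ and $c\neq -d$. Let $A,A'\in GL(n)$ each have $n$ distinct eigenvalues, let $b,b'\in\mathbb{R}^n$, and assume $b^T\eta\neq 0$ for every left eigenvector $\eta\in\mathbb{C}^n$ of $A$. Suppose the systems $x[i+1]=Ax[i]+bu[i]$ and $x[i+1]=A'x[i]+b'u[i]$, both with $x[0]=0$ and $u[i]\in\mathcal{U}$, have identical reachable sets $\mathcal{R}(j,0)$ for all $j\in\mathbb{N}$. Then $(A,b)=(A',b')$.
   Context: For a system $x[i+1]=Ax[i]+bu[i]$, $x[0]=0$, $u[i]\in\mathcal{U}$, the reachable set at time $j$ is $\mathcal{R}(j,0)=\{\phi_u(j;0)\mid u:\mathbb{Z}_{\ge0}\to\mathcal{U}\}$, where $\phi_u(\cdot;0)$ is the trajectory from initial state $0$ under input sequence $u$. $GL(n)$ is the set of invertible real $n\times n$ matrices. A left eigenvector of $A$ is a nonzero $\eta\in\mathbb{C}^n$ with $\eta^TA=\lambda\eta^T$ for some $\lambda\in\mathbb{C}$; $b^T\eta=\sum_j b_j\eta_j$. *)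

theory Defs
  imports "HOL-Analysis.Analysis"
begin

fun traj :: "real^'n^'n \<Rightarrow> real^'n \<Rightarrow> (nat \<Rightarrow> real) \<Rightarrow> nat \<Rightarrow> real^'n" where
  "traj A b u 0 = 0"
| "traj A b u (Suc i) = A *v traj A b u i + u i *\<^sub>R b"

definition reach_set :: "real^'n^'n \<Rightarrow> real^'n \<Rightarrow> real set \<Rightarrow> nat \<Rightarrow> (real^'n) set" where
  "reach_set A b U j = {traj A b u j | u. \<forall>i. u i \<in> U}"

definition cmat :: "real^'n^'m \<Rightarrow> complex^'n^'m" where
  "cmat A = (\<chi> i j. complex_of_real (A $ i $ j))"

definition cvec :: "real^'n \<Rightarrow> complex^'n" where
  "cvec b = (\<chi> i. complex_of_real (b $ i))"

definition eigenvalues :: "real^'n^'n \<Rightarrow> complex set" where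
  "eigenvalues A = {l. \<exists>v :: complex^'n. v \<noteq> 0 \<and> cmat A *v v = l *s v}"

definition left_eigenvector :: "real^'n^'n \<Rightarrow> complex^'n \<Rightarrow> bool" where
  "left_eigenvector A \<eta> \<longleftrightarrow> \<eta> \<noteq> 0 \<and> (\<exists>l. \<eta> v* cmat A = l *s \<eta>)"

end

theory Submission
  imports Defs "HOL-Computational_Algebra.Fundamental_Theorem_Algebra"
begin

(*
  The support function of the reachable set R(j,0) in direction w is
  \<Sum>k<j. h (w \<bullet> A^k b), where h s = max (c s) (d s) is the support function of [c,d].
  Equal reachable sets therefore give h (w \<bullet> A^k b) = h (w \<bullet> A'^k b') for all w and k, and
  since h s - h (-s) = (c + d) s with c + d \<noteq> 0, A^k b = A'^k b' for all k. Hence b = b', and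
  A, A' agree on the Krylov space of (A, b). That space is all of \<real>^n by the
  Popov-Belevitch-Hautus argument: the complex vectors annihilating it form an A^T-invariant
  subspace, which would contain a left eigenvector \<eta> of A with b^T \<eta> = 0 if it were nonzero.
*)

definition krylov :: "'a::semiring_1^'n^'n \<Rightarrow> 'a^'n \<Rightarrow> nat \<Rightarrow> 'a^'n" where
  "krylov M v k = ((\<lambda>x. M *v x) ^^ k) v"

lemma krylov_0 [simp]: "krylov M v 0 = v"
  by (simp add: krylov_def)

lemma krylov_Suc [simp]: "krylov M v (Suc k) = M *v krylov M v k"
  by (simp add: krylov_def)

definition poly_mat_vec :: "'a::field poly \<Rightarrow> 'a^'n^'n \<Rightarrow> 'a^'n \<Rightarrow> 'a^'n" where
  "poly_mat_vec p M v = (\<Sum>i\<le>degree p. coeff p i *s krylov M v i)"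

lemma poly_mat_vec_eq_sum:
  assumes "\<And>i. i \<ge> N \<Longrightarrow> coeff p i = 0"
  shows "poly_mat_vec p M v = (\<Sum>i<N. coeff p i *s krylov M v i)"
proof -
  have "(\<Sum>i\<le>degree p. coeff p i *s krylov M v i) = (\<Sum>i<max N (Suc (degree p)). coeff p i *s krylov M v i)"
    by (intro sum.mono_neutral_left) (auto simp: coeff_eq_0)
  also have "\<dots> = (\<Sum>i<N. coeff p i *s krylov M v i)"
    by (intro sum.mono_neutral_right) (auto simp: assms)
  finally show ?thesis
    unfolding poly_mat_vec_def .
qed

lemma poly_mat_vec_eq_sum_degree:
  "degree p < N \<Longrightarrow> poly_mat_vec p M v = (\<Sum>i<N. coeff p i *s krylov M v i)"
  by (intro poly_mat_vec_eq_sum coeff_eq_0) simp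

lemma poly_mat_vec_add: "poly_mat_vec (p + q) M v = poly_mat_vec p M v + poly_mat_vec q M v"
proof -
  define N where "N = Suc (degree p + degree q)"
  have "degree (p + q) < N" "degree p < N" "degree q < N"
    using degree_add_le_max[of p q] by (auto simp: N_def)
  then show ?thesis
    by (simp add: poly_mat_vec_eq_sum_degree vec.scale_left_distrib sum.distrib)
qed

lemma poly_mat_vec_diff: "poly_mat_vec (p - q) M v = poly_mat_vec p M v - poly_mat_vec q M v"
  using poly_mat_vec_add[of "p - q" q M v] by simp

lemma poly_mat_vec_smult: "poly_mat_vec (smult a p) M v = a *s poly_mat_vec p M v"
  by (simp add: poly_mat_vec_eq_sum_degree[of _ "Suc (degree p)"] vec.scale_sum_right
      le_imp_less_Suc vec.scale_scale)

lemma poly_mat_vec_pCons_0: "poly_mat_vec (pCons 0 p) M v = M *v poly_mat_vec p M v"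
proof -
  have "poly_mat_vec (pCons 0 p) M v = (\<Sum>i<Suc (Suc (degree p)). coeff (pCons 0 p) i *s krylov M v i)"
    by (rule poly_mat_vec_eq_sum_degree) (simp add: degree_pCons_le le_imp_less_Suc)
  also have "\<dots> = (\<Sum>i<Suc (degree p). coeff p i *s (M *v krylov M v i))"
    by (subst sum.lessThan_Suc_shift) simp
  also have "\<dots> = M *v (\<Sum>i<Suc (degree p). coeff p i *s krylov M v i)"
    by (simp only: vec.sum vec.scale)
  finally show ?thesis
    by (simp only: poly_mat_vec_eq_sum_degree[of p "Suc (degree p)"] lessI)
qed

lemma poly_mat_vec_linear_factor:
  "poly_mat_vec ([:-z, 1:] * q) M v = M *v poly_mat_vec q M v - z *s poly_mat_vec q M v"
proof -
  have "[:-z, 1:] * q = smult (-z) q + pCons 0 q"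
    by simp
  then have "poly_mat_vec ([:-z, 1:] * q) M v = poly_mat_vec (smult (-z) q) M v + poly_mat_vec (pCons 0 q) M v"
    by (simp only: poly_mat_vec_add)
  then show ?thesis
    by (simp only: poly_mat_vec_smult poly_mat_vec_pCons_0) (simp add: vec.scale_minus_left)
qed

lemma poly_mat_vec_monom: "poly_mat_vec (monom a i) M v = a *s krylov M v i"
  by (simp add: poly_mat_vec_eq_sum_degree[of _ "Suc i"] degree_monom_le le_imp_less_Suc coeff_monom)

lemma poly_mat_vec_in_span:
  assumes "\<And>i. i \<ge> k \<Longrightarrow> coeff p i = 0"
  shows "poly_mat_vec p M v \<in> vec.span (krylov M v ` {..<k})"
proof -
  have "poly_mat_vec p M v = (\<Sum>i<k. coeff p i *s krylov M v i)"
    by (rule poly_mat_vec_eq_sum) (simp add: assms)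
  also have "\<dots> \<in> vec.span (krylov M v ` {..<k})"
    by (intro vec.span_sum vec.span_scale vec.span_base imageI) simp
  finally show ?thesis .
qed

lemma span_krylov_imp_poly_mat_vec:
  assumes "y \<in> vec.span (krylov M v ` {..<k})"
  shows "\<exists>p. (\<forall>i\<ge>k. coeff p i = 0) \<and> y = poly_mat_vec p M v"
  using assms
proof (induction rule: vec.span_induct_alt)
  case base
  show ?case
    by (intro exI[of _ 0]) (simp add: poly_mat_vec_def)
next
  case (step a x y)
  then obtain i p where "i < k" "x = krylov M v i" "\<forall>i\<ge>k. coeff p i = 0" "y = poly_mat_vec p M v"
    by blast
  then show ?case
    by (intro exI[of _ "monom a i + p"])
      (auto simp: poly_mat_vec_add poly_mat_vec_monom coeff_monom)
qed

lemma independent_if_not_in_span_of_predecessors: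
  fixes F :: "nat \<Rightarrow> 'a::field^'n"
  assumes "\<And>k. k \<le> N \<Longrightarrow> F k \<notin> vec.span (F ` {..<k})"
  shows "vec.independent (F ` {..N}) \<and> card (F ` {..N}) = Suc N"
  using assms
proof (induction N)
  case 0
  then show ?case
    using vec.independent_insertI[of "F 0" "{}"] by auto
next
  case (Suc N)
  then have IH: "vec.independent (F ` {..N})" "card (F ` {..N}) = Suc N"
    by auto
  have new: "F (Suc N) \<notin> vec.span (F ` {..N})"
    using Suc.prems[of "Suc N"] by (simp add: lessThan_Suc_atMost)
  then have "F (Suc N) \<notin> F ` {..N}"
    by (meson vec.span_base)
  moreover have "F ` {..Suc N} = insert (F (Suc N)) (F ` {..N})"
    by (simp add: atMost_Suc)
  ultimately show ?case
    using IH new by (simp add: vec.independent_insertI)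
qed

lemma krylov_first_dependent:
  fixes M :: "'a::field^'n^'n"
  obtains m where "krylov M v m \<in> vec.span (krylov M v ` {..<m})"
    and "\<And>k. k < m \<Longrightarrow> krylov M v k \<notin> vec.span (krylov M v ` {..<k})"
proof -
  have "\<exists>m. krylov M v m \<in> vec.span (krylov M v ` {..<m})" (is "\<exists>m. ?P m")
  proof (rule ccontr)
    assume "\<nexists>m. ?P m"
    then have "vec.independent (krylov M v ` {..CARD('n)})" "card (krylov M v ` {..CARD('n)}) = Suc CARD('n)"
      using independent_if_not_in_span_of_predecessors[of "CARD('n)" "krylov M v"] by blast+
    then have "Suc CARD('n) \<le> vec.dim (krylov M v ` {..CARD('n)})"
      using vec.independent_bound_general by metis
    also have "\<dots> \<le> vec.dim (UNIV :: ('a^'n) set)"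
      by (rule vec.dim_subset) simp
    finally show False
      by (simp add: vec_dim_card card_cart_basis)
  qed
  then show ?thesis
    using that[of "LEAST m. ?P m"] LeastI_ex[of ?P] not_less_Least[of _ ?P] by blast
qed

lemma poly_mat_vec_nonzero:
  assumes "q \<noteq> 0"
    and indep: "\<And>k. k \<le> degree q \<Longrightarrow> krylov M v k \<notin> vec.span (krylov M v ` {..<k})"
  shows "poly_mat_vec q M v \<noteq> 0"
proof
  assume q0: "poly_mat_vec q M v = 0"
  define r where "r = monom 1 (degree q) - smult (1 / lead_coeff q) q"
  have "coeff r i = 0" if "i \<ge> degree q" for i
    using that \<open>q \<noteq> 0\<close> by (cases "i = degree q") (auto simp: r_def coeff_monom coeff_eq_0)
  then have "poly_mat_vec r M v \<in> vec.span (krylov M v ` {..<degree q})"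
    by (rule poly_mat_vec_in_span)
  moreover have "poly_mat_vec r M v = krylov M v (degree q)"
    using q0 by (simp add: r_def poly_mat_vec_diff poly_mat_vec_smult poly_mat_vec_monom)
  ultimately show False
    using indep by auto
qed

lemma invariant_subspace_has_eigenvector:
  fixes M :: "complex^'n^'n"
  assumes W: "vec.subspace W" and inv: "\<And>x. x \<in> W \<Longrightarrow> M *v x \<in> W"
    and "v \<in> W" and "v \<noteq> 0"
  obtains \<eta> l where "\<eta> \<in> W" and "\<eta> \<noteq> 0" and "M *v \<eta> = l *s \<eta>"
proof -
  \<comment> \<open>The first dependence among v, M v, M^2 v, ... yields a monic p of minimal degree with
     p(M) v = 0; splitting off a linear factor X - z of p, the eigenvector is q(M) v.\<close>
  obtain m where dep: "krylov M v m \<in> vec.span (krylov M v ` {..<m})"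
    and indep: "\<And>k. k < m \<Longrightarrow> krylov M v k \<notin> vec.span (krylov M v ` {..<k})"
    using krylov_first_dependent[where M = M and v = v] by blast
  obtain r where r: "\<And>i. i \<ge> m \<Longrightarrow> coeff r i = 0" and rel: "krylov M v m = poly_mat_vec r M v"
    using span_krylov_imp_poly_mat_vec[OF dep] by blast
  define p where "p = monom 1 m - r"
  have p0: "poly_mat_vec p M v = 0"
    using rel by (simp add: p_def poly_mat_vec_diff poly_mat_vec_monom)
  have "m \<noteq> 0"
    using dep \<open>v \<noteq> 0\<close> by (cases m) auto
  have "degree p = m"
    by (intro antisym degree_le le_degree) (auto simp: p_def coeff_monom r)
  then obtain z where "poly p z = 0"
    using \<open>m \<noteq> 0\<close> fundamental_theorem_of_algebra[of p] by (auto simp: constant_degree)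
  then obtain q where pq: "p = [:-z, 1:] * q"
    using poly_eq_0_iff_dvd by blast
  have "q \<noteq> 0"
    using pq \<open>degree p = m\<close> \<open>m \<noteq> 0\<close> by auto
  have "degree p = Suc (degree q)"
    unfolding pq using \<open>q \<noteq> 0\<close> by (subst degree_mult_eq) auto
  then have "degree q < m"
    using \<open>degree p = m\<close> by simp
  have "poly_mat_vec q M v \<noteq> 0"
    using \<open>q \<noteq> 0\<close> \<open>degree q < m\<close> indep by (intro poly_mat_vec_nonzero) auto
  moreover have "M *v poly_mat_vec q M v = z *s poly_mat_vec q M v"
    using p0 unfolding pq poly_mat_vec_linear_factor by simp
  moreover have "krylov M v k \<in> W" for k
    using \<open>v \<in> W\<close> by (induction k) (auto intro: inv)
  then have "poly_mat_vec q M v \<in> W"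
    unfolding poly_mat_vec_def by (intro vec.subspace_sum[OF W] vec.subspace_scale[OF W])
  ultimately show ?thesis
    using that by blast
qed

lemma sum_cvec_mult_transpose_cmat:
  fixes A :: "real^'n^'n"
  shows "(\<Sum>j\<in>UNIV. cvec x $ j * (transpose (cmat A) *v \<eta>) $ j) = (\<Sum>j\<in>UNIV. cvec (A *v x) $ j * \<eta> $ j)"
proof -
  have "(\<Sum>j\<in>UNIV. cvec x $ j * (transpose (cmat A) *v \<eta>) $ j)
      = (\<Sum>j\<in>UNIV. \<Sum>i\<in>UNIV. complex_of_real (x $ j) * complex_of_real (A $ i $ j) * \<eta> $ i)"
    by (simp add: matrix_vector_mult_def transpose_def cmat_def cvec_def sum_distrib_left mult.assoc)
  also have "\<dots> = (\<Sum>i\<in>UNIV. \<Sum>j\<in>UNIV. complex_of_real (x $ j) * complex_of_real (A $ i $ j) * \<eta> $ i)"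
    by (rule sum.swap)
  also have "\<dots> = (\<Sum>i\<in>UNIV. cvec (A *v x) $ i * \<eta> $ i)"
    by (simp add: matrix_vector_mult_def cvec_def sum_distrib_right sum_distrib_left mult_ac)
  finally show ?thesis .
qed

lemma span_krylov_eq_UNIV:
  fixes A :: "real^'n^'n"
  assumes "\<forall>\<eta>. left_eigenvector A \<eta> \<longrightarrow> (\<Sum>j\<in>UNIV. cvec b $ j * \<eta> $ j) \<noteq> 0"
  shows "span (range (krylov A b)) = UNIV"
proof (rule ccontr)
  assume "span (range (krylov A b)) \<noteq> UNIV"
  then have "dim (range (krylov A b)) < DIM(real^'n)"
    using dim_eq_full dim_subset_UNIV[of "range (krylov A b)"] by (metis le_neq_implies_less)
  then obtain w :: "real^'n" where "w \<noteq> 0" and "\<And>y. y \<in> span (range (krylov A b)) \<Longrightarrow> orthogonal w y"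
    using orthogonal_to_subspace_exists by blast
  then have w_orth: "krylov A b k \<bullet> w = 0" for k
    by (metis orthogonal_def inner_commute rangeI span_base)
  define W where "W = {\<eta>::complex^'n. \<forall>k. (\<Sum>j\<in>UNIV. cvec (krylov A b k) $ j * \<eta> $ j) = 0}"
  have "vec.subspace W"
    unfolding vec.subspace_def W_def
    by (simp add: distrib_left sum.distrib mult.left_commute[of _ "_ :: complex"] sum_distrib_left[symmetric])
  moreover have "transpose (cmat A) *v \<eta> \<in> W" if "\<eta> \<in> W" for \<eta>
  proof -
    have "(\<Sum>j\<in>UNIV. cvec (krylov A b k) $ j * (transpose (cmat A) *v \<eta>) $ j) = 0" for k
      using that unfolding sum_cvec_mult_transpose_cmat krylov_Suc[symmetric] W_def by blast
    then show ?thesis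
      unfolding W_def by blast
  qed
  moreover have "cvec w \<in> W"
    using w_orth by (simp add: W_def cvec_def inner_vec_def flip: of_real_mult of_real_sum)
  moreover have "cvec w \<noteq> 0"
    using \<open>w \<noteq> 0\<close> by (simp add: cvec_def vec_eq_iff)
  ultimately obtain \<eta> l where "\<eta> \<in> W" "\<eta> \<noteq> 0" "transpose (cmat A) *v \<eta> = l *s \<eta>"
    by (rule invariant_subspace_has_eigenvector)
  then have "left_eigenvector A \<eta>"
    by (auto simp: left_eigenvector_def transpose_matrix_vector)
  moreover have "(\<Sum>j\<in>UNIV. cvec (krylov A b 0) $ j * \<eta> $ j) = 0"
    using \<open>\<eta> \<in> W\<close> unfolding W_def by blast
  ultimately show False
    using assms by simp
qed

definition interval_support :: "real \<Rightarrow> real \<Rightarrow> real \<Rightarrow> real" where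
  "interval_support c d s = max (c * s) (d * s)"

lemma mult_le_interval_support: "x \<in> {c..d} \<Longrightarrow> x * s \<le> interval_support c d s"
  unfolding interval_support_def
  by (cases "s \<ge> 0") (auto simp: max_def intro: mult_right_mono mult_right_mono_neg)

lemma interval_support_eq: "c \<le> d \<Longrightarrow> interval_support c d s = (if s \<ge> 0 then d else c) * s"
  unfolding interval_support_def
  by (cases "s \<ge> 0") (auto simp: max_def intro: mult_right_mono mult_right_mono_neg)

lemma interval_support_minus_uminus: "interval_support c d s - interval_support c d (- s) = (c + d) * s"
  by (simp add: interval_support_def max_def algebra_simps)

(* The support function of reach_set A b {c..d} j. *)
definition reach_support :: "real^'n^'n \<Rightarrow> real^'n \<Rightarrow> real \<Rightarrow> real \<Rightarrow> nat \<Rightarrow> real^'n \<Rightarrow> real" where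
  "reach_support A b c d j w = (\<Sum>k<j. interval_support c d (w \<bullet> krylov A b k))"

lemma reach_support_Suc:
  "reach_support A b c d (Suc j) w = interval_support c d (w \<bullet> b) + reach_support A b c d j (w v* A)"
  unfolding reach_support_def sum.lessThan_Suc_shift
  by (simp add: dot_lmul_matrix del: krylov_Suc) (simp add: krylov_def funpow_Suc_right)

lemma traj_cong: "(\<And>i. i < j \<Longrightarrow> u i = u' i) \<Longrightarrow> traj A b u j = traj A b u' j"
  by (induction j) auto

lemma inner_traj_le_reach_support:
  assumes "\<And>i. u i \<in> {c..d}"
  shows "w \<bullet> traj A b u j \<le> reach_support A b c d j w"
proof (induction j arbitrary: w)
  case 0
  then show ?case
    by (simp add: reach_support_def)
next
  case (Suc j)
  have "w \<bullet> traj A b u (Suc j) = (w v* A) \<bullet> traj A b u j + u j * (w \<bullet> b)"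
    by (simp add: inner_add_right dot_lmul_matrix)
  also have "\<dots> \<le> reach_support A b c d j (w v* A) + interval_support c d (w \<bullet> b)"
    using Suc.IH mult_le_interval_support[OF assms] by (rule add_mono)
  finally show ?case
    by (simp add: reach_support_Suc)
qed

lemma reach_support_attained:
  assumes "c \<le> d"
  obtains u where "\<And>i. u i \<in> {c..d}" and "w \<bullet> traj A b u j = reach_support A b c d j w"
proof -
  have "\<exists>u. (\<forall>i. u i \<in> {c..d}) \<and> w \<bullet> traj A b u j = reach_support A b c d j w"
  proof (induction j arbitrary: w)
    case 0
    show ?case
      using assms by (intro exI[of _ "\<lambda>_. c"]) (simp add: reach_support_def)
  next
    case (Suc j)
    obtain u where u: "\<forall>i. u i \<in> {c..d}" "(w v* A) \<bullet> traj A b u j = reach_support A b c d j (w v* A)"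
      using Suc.IH by blast
    define u' where "u' = u(j := if w \<bullet> b \<ge> 0 then d else c)"
    have "traj A b u' j = traj A b u j"
      by (rule traj_cong) (simp add: u'_def)
    then have "w \<bullet> traj A b u' (Suc j) = (w v* A) \<bullet> traj A b u j + u' j * (w \<bullet> b)"
      by (simp add: inner_add_right dot_lmul_matrix)
    also have "\<dots> = reach_support A b c d (Suc j) w"
      using u(2) by (simp add: reach_support_Suc u'_def interval_support_eq[OF assms])
    finally have "w \<bullet> traj A b u' (Suc j) = reach_support A b c d (Suc j) w" .
    moreover have "\<forall>i. u' i \<in> {c..d}"
      using u(1) assms by (simp add: u'_def)
    ultimately show ?case
      by blast
  qed
  then show ?thesis
    using that by blast
qed

lemma reach_support_mono:
  assumes "c \<le> d" and "reach_set A b {c..d} j \<subseteq> reach_set A' b' {c..d} j"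
  shows "reach_support A b c d j w \<le> reach_support A' b' c d j w"
proof -
  obtain u where "\<And>i. u i \<in> {c..d}" and u: "w \<bullet> traj A b u j = reach_support A b c d j w"
    using reach_support_attained[OF assms(1)] by blast
  then have "traj A b u j \<in> reach_set A' b' {c..d} j"
    using assms(2) by (auto simp: reach_set_def)
  then obtain u' where "\<And>i. u' i \<in> {c..d}" and "traj A b u j = traj A' b' u' j"
    by (auto simp: reach_set_def)
  then show ?thesis
    using inner_traj_le_reach_support[of u' c d w A' b' j] u by simp
qed

lemma krylov_eq_if_reach_set_eq:
  assumes "c \<le> d" and "c \<noteq> - d"
    and reach: "\<And>j. reach_set A b {c..d} j = reach_set A' b' {c..d} j"
  shows "krylov A b = krylov A' b'"
proof
  fix k
  \<comment> \<open>The k-th increment of the support function is interval_support at w \<bullet> A^k b, and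
     subtracting its value at -w isolates (c + d) (w \<bullet> A^k b).\<close>
  have support_eq: "reach_support A b c d j w = reach_support A' b' c d j w" for j w
    using reach_support_mono[OF assms(1), of A b j A' b' w] reach_support_mono[OF assms(1), of A' b' j A b w]
      reach[of j] by simp
  have "interval_support c d (w \<bullet> krylov A b k) = interval_support c d (w \<bullet> krylov A' b' k)" for w
    using support_eq[of "Suc k" w] support_eq[of k w] by (simp add: reach_support_def)
  then have "(c + d) * (w \<bullet> krylov A b k) = (c + d) * (w \<bullet> krylov A' b' k)" for w
    using interval_support_minus_uminus[of c d "w \<bullet> krylov A b k"]
      interval_support_minus_uminus[of c d "w \<bullet> krylov A' b' k"] by (metis inner_minus_left)
  then have "w \<bullet> (krylov A b k - krylov A' b' k) = 0" for w
    using \<open>c \<noteq> - d\<close> by (simp add: inner_diff_right)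
  then show "krylov A b k = krylov A' b' k"
    by (metis inner_eq_zero_iff eq_iff_diff_eq_0)
qed

lemma matrix_eq_if_krylov_eq:
  fixes A A' :: "real^'n^'n"
  assumes "krylov A b = krylov A' b'" and "span (range (krylov A b)) = UNIV"
  shows "A = A'"
proof -
  have "A *v krylov A b k = A' *v krylov A b k" for k
    using fun_cong[OF assms(1), of "Suc k"] fun_cong[OF assms(1), of k] by simp
  then have "span (range (krylov A b)) \<subseteq> {x. A *v x = A' *v x}"
    by (intro span_minimal)
      (auto simp: subspace_def matrix_vector_right_distrib matrix_vector_mult_scaleR)
  then show ?thesis
    using assms(2) by (auto simp: matrix_eq)
qed

theorem theorem2:
  fixes A A' :: "real^'n^'n" and b b' :: "real^'n" and c d :: real
  assumes "c < d" and "c \<noteq> - d"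
    and "invertible A" and "invertible A'"
    and "card (eigenvalues A) = CARD('n)"
    and "card (eigenvalues A') = CARD('n)"
    and "\<forall>\<eta>. left_eigenvector A \<eta> \<longrightarrow> (\<Sum>j\<in>UNIV. cvec b $ j * \<eta> $ j) \<noteq> 0"
    and "\<forall>j. reach_set A b {c..d} j = reach_set A' b' {c..d} j"
  shows "A = A' \<and> b = b'"
proof -
  have krylov_eq: "krylov A b = krylov A' b'"
    using assms(1,2,8) by (intro krylov_eq_if_reach_set_eq) auto
  then have "b = b'"
    by (metis krylov_0)
  moreover have "A = A'"
    using krylov_eq span_krylov_eq_UNIV[OF assms(7)] by (rule matrix_eq_if_krylov_eq)
  ultimately show ?thesis
    by simp
qed

end
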